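(* $$\sum_{n=1}^\infty \frac{H_n \binom{2n}{n}}{(n+1)^2\, 2^{2n}} = -\frac{\pi^2}{3} - 4(\log 2)^2 + 8\log 2.$$
   Context: $H_n=\sum_{k=1}^n \frac{1}{k}$ denotes the $n$-th harmonic number and $\binom{2n}{n}$ the central binomial coefficient; $\log$ is the natural logarithm. *)

theory Defs
  imports "HOL-Analysis.Analysis"
begin

end

theory Submission
  imports Defs "HOL-Real_Asymp.Real_Asymp"
begin

(* Let c_n = (2n choose n) / 4^n, so that sum c_n x^n = 1 / sqrt (1 - x). Integrating once and
   twice, with the substitution x = 4u(1 - u), u = (1 - sqrt (1 - x)) / 2, gives
     sum c_n x^n / n = -2 ln (1 - u),    sum c_n x^n / n^2 = 2 Li2 u - ln (1 - u)^2,
   and for the tails T_k = sum_{n >= k} c_n / n one finds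
     sum T_k x^k / k = pi^2/3 + 4 Li2 (-sqrt (1 - x)).
   Letting x -> 1 (Abel's theorem, and its converse since all coefficients are nonnegative)
   and using Euler's reflection formula for Li2 (1/2) yields
     sum c_n / n = 2 ln 2,   sum c_n / n^2 = pi^2/6 - 2 (ln 2)^2,   sum T_k / k = pi^2/3,
   and Abel summation turns the last series into sum c_n H_n / n = pi^2/3. Finally
   H_n c_n / (n+1)^2 differs from 2 c_n / n^2 - 2 c_n H_n / n + 4 c_n / n by a telescoping
   term that tends to 0. *)

section \<open>Power series with bounded coefficients\<close>

lemma divide_of_nat_power_le_self: "0 \<le> (a :: real) \<Longrightarrow> a / real n ^ k \<le> a"
  by (cases "n = 0") (auto simp: divide_le_eq mult_le_cancel_left1 one_le_power power_0_left)

lemma summable_powser_bounded_coeffs: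
  fixes a :: "nat \<Rightarrow> real"
  assumes "\<And>n. \<bar>a n\<bar> \<le> K" "\<bar>z\<bar> < 1"
  shows "summable (\<lambda>n. a n * z^n)"
proof (rule summable_comparison_test')
  show "summable (\<lambda>n. K * \<bar>z\<bar>^n)" using assms(2) by (intro summable_mult summable_geometric) simp
  show "norm (a n * z^n) \<le> K * \<bar>z\<bar>^n" for n
    using assms(1)[of n] by (simp add: abs_mult power_abs mult_right_mono)
qed

lemma powser_has_real_derivative_bounded_coeffs:
  fixes a :: "nat \<Rightarrow> real"
  assumes "\<And>n. \<bar>a n\<bar> \<le> K" "\<bar>z\<bar> < 1"
  shows "((\<lambda>x. \<Sum>n. a n * x^n) has_real_derivative (\<Sum>n. diffs a n * z^n)) (at z)"
  by (rule termdiffs_strong'[where K=1])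
     (use assms summable_powser_bounded_coeffs[OF assms(1)] in auto)

lemma isCont_powser_bounded_coeffs:
  fixes a :: "nat \<Rightarrow> real"
  assumes "\<And>n. \<bar>a n\<bar> \<le> K" "\<bar>z\<bar> < 1"
  shows "isCont (\<lambda>x. \<Sum>n. a n * x^n) z"
  using powser_has_real_derivative_bounded_coeffs[OF assms] by (rule DERIV_isCont)

lemma continuous_on_powser_abs_summable:
  fixes a :: "nat \<Rightarrow> real"
  assumes "summable (\<lambda>n. \<bar>a n\<bar>)"
  shows "continuous_on {-1..1} (\<lambda>x. \<Sum>n. a n * x^n)"
proof (rule uniform_limit_theorem[where F=sequentially])
  show "\<forall>\<^sub>F n in sequentially. continuous_on {-1..1} (\<lambda>x. \<Sum>i<n. a i * x^i)"
    by (intro always_eventually allI continuous_intros)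
  show "uniform_limit {-1..1} (\<lambda>n x. \<Sum>i<n. a i * x^i) (\<lambda>x. \<Sum>i. a i * x^i) sequentially"
  proof (rule Weierstrass_m_test[OF _ assms])
    fix n and x :: real assume "x \<in> {-1..1}"
    hence "\<bar>a n\<bar> * \<bar>x\<bar>^n \<le> \<bar>a n\<bar> * 1" by (intro mult_left_mono power_le_one) auto
    thus "norm (a n * x^n) \<le> \<bar>a n\<bar>" by (simp add: abs_mult power_abs)
  qed
qed simp

lemma powser_sums_Suc_coeffs:
  fixes f :: "nat \<Rightarrow> real"
  assumes "(\<lambda>n. f n * z^n) sums s" "z \<noteq> 0"
  shows "(\<lambda>n. f (Suc n) * z^n) sums ((s - f 0) / z)"
proof -
  have "summable (\<lambda>n. f n * z^n)" using assms(1) by (rule sums_summable)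
  from powser_split_head(2,3)[OF this] show ?thesis
    using assms by (simp add: sums_iff eq_divide_eq)
qed

lemma powser_sums_if_deriv:
  fixes a :: "nat \<Rightarrow> real" and g g' :: "real \<Rightarrow> real"
  assumes bounded: "\<And>n. \<bar>a n\<bar> \<le> K"
    and g_cont: "continuous_on {0..<1} g" and g_0: "g 0 = a 0"
    and g_deriv: "\<And>x. 0 < x \<Longrightarrow> x < 1 \<Longrightarrow> (g has_real_derivative g' x) (at x)"
    and diffs_sums: "\<And>x. 0 < x \<Longrightarrow> x < 1 \<Longrightarrow> (\<lambda>n. diffs a n * x^n) sums g' x"
    and x: "0 \<le> x" "x < 1"
  shows "(\<lambda>n. a n * x^n) sums g x"
proof -
  define f where "f = (\<lambda>x. \<Sum>n. a n * x^n)"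
  have "(\<lambda>t. f t - g t) x = (\<lambda>t. f t - g t) 0"
  proof (cases "x = 0")
    case False
    show ?thesis
    proof (rule DERIV_isconst2[where a=0 and b=x])
      have "continuous_on {0..x} f"
        unfolding f_def using x
        by (intro continuous_at_imp_continuous_on ballI isCont_powser_bounded_coeffs[OF bounded])
           auto
      moreover have "continuous_on {0..x} g" using x by (intro continuous_on_subset[OF g_cont]) auto
      ultimately show "continuous_on {0..x} (\<lambda>t. f t - g t)" by (intro continuous_intros)
    next
      fix t assume t: "0 < t" "t < x"
      have "(f has_real_derivative g' t) (at t)"
        using powser_has_real_derivative_bounded_coeffs[of a K t, OF bounded] diffs_sums[of t] t x
        by (simp add: f_def sums_iff)
      thus "((\<lambda>t. f t - g t) has_real_derivative 0) (at t)"
        using DERIV_diff[OF _ g_deriv, of f "g' t" t] t x by simp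
    qed (use False x in auto)
  qed simp
  hence "f x = g x" using g_0 by (simp add: f_def)
  moreover have "summable (\<lambda>n. a n * x^n)"
    using x by (intro summable_powser_bounded_coeffs[OF bounded]) auto
  ultimately show ?thesis by (simp add: f_def sums_iff)
qed

text \<open>Abel's theorem and its converse for nonnegative coefficients: summability of \<open>a\<close> is not
  assumed, it follows because the partial sums are bounded by \<open>l\<close>.\<close>
lemma sums_if_nonneg_powser_tendsto:
  fixes a :: "nat \<Rightarrow> real" and f :: "real \<Rightarrow> real"
  assumes nonneg: "\<And>n. a n \<ge> 0"
    and powser: "\<And>x. 0 < x \<Longrightarrow> x < 1 \<Longrightarrow> (\<lambda>n. a n * x^n) sums f x"
    and lim: "(f \<longlongrightarrow> l) (at_left 1)"
  shows "a sums l"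
proof -
  have near_1: "\<forall>\<^sub>F x in at_left (1::real). 0 < x \<and> x < 1"
    by (rule eventually_at_left_1) simp
  have partial_le: "(\<Sum>i<N. a i) \<le> l" for N
  proof (rule tendsto_le[OF trivial_limit_at_left_real lim])
    have "((\<lambda>x. \<Sum>i<N. a i * x^i) \<longlongrightarrow> (\<Sum>i<N. a i * 1^i)) (at_left 1)"
      by (intro tendsto_intros)
    thus "((\<lambda>x. \<Sum>i<N. a i * x^i) \<longlongrightarrow> (\<Sum>i<N. a i)) (at_left 1)" by simp
    show "\<forall>\<^sub>F x in at_left 1. (\<Sum>i<N. a i * x^i) \<le> f x"
      using near_1
    proof (rule eventually_mono)
      fix x :: real assume x: "0 < x \<and> x < 1"
      show "(\<Sum>i<N. a i * x^i) \<le> f x"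
        using sum_le_suminf[OF sums_summable[OF powser]] sums_unique[OF powser] x nonneg by auto
    qed
  qed
  have summable: "summable a" by (rule summableI_nonneg_bounded[OF nonneg partial_le])
  have "continuous_on {0..1} (\<lambda>x. \<Sum>n. a n * x^n)"
    using summable nonneg by (intro continuous_on_subset[OF continuous_on_powser_abs_summable]) auto
  hence "((\<lambda>x. \<Sum>n. a n * x^n) \<longlongrightarrow> (\<Sum>n. a n * 1^n)) (at_left 1)"
    by (rule continuous_on_Icc_at_leftD) simp
  moreover have "\<forall>\<^sub>F x in at_left 1. (\<Sum>n. a n * x^n) = f x"
    using near_1 by (rule eventually_mono) (use powser in \<open>auto simp: sums_iff\<close>)
  ultimately have "(f \<longlongrightarrow> suminf a) (at_left 1)" by (simp add: Lim_transform_eventually)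
  with lim have "l = suminf a" by (rule tendsto_unique[OF trivial_limit_at_left_real])
  thus ?thesis using summable by (simp add: summable_sums)
qed

section \<open>The dilogarithm\<close>

lemma powser_inverse_Suc_sums:
  fixes z :: real
  assumes "z \<noteq> 0" "\<bar>z\<bar> < 1"
  shows "(\<lambda>n. 1 / real (Suc n) * z^n) sums (- ln (1 - z) / z)"
proof -
  have "(\<lambda>n. - ((-(-z))^n) / real n) sums ln (1 + (-z))"
    by (rule ln_series') (use assms in simp)
  hence "(\<lambda>n. 1 / real n * z^n) sums (- ln (1 - z))"
    using sums_minus by fastforce
  thus ?thesis using powser_sums_Suc_coeffs assms(1) by fastforce
qed

text \<open>The dilogarithm \<open>Li\<^sub>2\<close>; the \<open>n = 0\<close> term vanishes because \<open>1 / 0 = 0\<close>.\<close>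
definition dilog :: "real \<Rightarrow> real" where
  "dilog z = (\<Sum>n. 1 / (real n)^2 * z^n)"

lemma dilog_0 [simp]: "dilog 0 = 0"
  unfolding dilog_def by (subst powser_zero) simp

lemma inverse_squares_sums': "(\<lambda>n. 1 / (real n)^2) sums (pi^2 / 6)"
proof -
  have "(\<lambda>n. 1 / (real (Suc n))^2) sums (pi^2 / 6)"
    using inverse_squares_sums by (simp only: of_nat_power Suc_eq_plus1)
  thus ?thesis by (subst (asm) sums_Suc_iff) simp
qed

lemma dilog_1: "dilog 1 = pi^2 / 6"
  using inverse_squares_sums' by (simp add: dilog_def sums_iff)

lemma summable_dilog: "\<bar>z\<bar> \<le> 1 \<Longrightarrow> summable (\<lambda>n. 1 / (real n)^2 * z^n)"
  by (rule summable_comparison_test'[OF sums_summable[OF inverse_squares_sums']])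
     (auto simp: abs_mult power_abs intro!: divide_right_mono power_le_one)

lemma dilog_minus_1: "dilog (-1) = - (pi^2 / 12)"
proof -
  define e where "e n = (if even n then 2 / (real n)^2 else 0)" for n
  have "(\<lambda>k. e (2 * k)) = (\<lambda>k. 1 / (real k)^2 / 2)"
    by (simp add: e_def power2_eq_square mult.commute)
  hence "(\<lambda>k. e (2 * k)) sums (pi^2 / 12)"
    using sums_divide[OF inverse_squares_sums', of 2] by simp
  hence "e sums (pi^2 / 12)"
    by (subst (asm) sums_mono_reindex) (auto simp: strict_mono_def e_def elim!: oddE)
  moreover have "e = (\<lambda>n. 1 / (real n)^2 * 1^n + 1 / (real n)^2 * (-1)^n)"
    by (auto simp: e_def)
  moreover have "(\<lambda>n. 1 / (real n)^2 * 1^n + 1 / (real n)^2 * (-1)^n) sums (dilog 1 + dilog (-1))"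
    unfolding dilog_def by (intro sums_add summable_sums summable_dilog) auto
  ultimately have "dilog 1 + dilog (-1) = pi^2 / 12" using sums_unique2 by metis
  thus ?thesis by (simp add: dilog_1)
qed

lemma continuous_on_dilog: "continuous_on {-1..1} dilog"
  unfolding dilog_def[abs_def]
  by (rule continuous_on_powser_abs_summable) (use summable_dilog[of 1] in simp)

text \<open>At \<open>z = 0\<close> the right-hand side would be \<open>0\<close> (as \<open>x / 0 = 0\<close>) but the derivative is \<open>1\<close>.\<close>
lemma dilog_has_real_derivative:
  assumes "z \<noteq> 0" "\<bar>z\<bar> < 1"
  shows "(dilog has_real_derivative - ln (1 - z) / z) (at z)"
proof -
  have "diffs (\<lambda>n. 1 / (real n)^2) = (\<lambda>n. 1 / real (Suc n))"
    by (simp add: diffs_def power2_eq_square del: of_nat_Suc)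
  moreover have "\<bar>1 / (real n)^2\<bar> \<le> 1" for n
    by (cases "n = 0") (auto simp: divide_le_eq_1 one_le_power)
  ultimately show ?thesis
    using powser_has_real_derivative_bounded_coeffs[of "\<lambda>n. 1 / (real n)^2" 1 z]
      powser_inverse_Suc_sums[OF assms] assms(2)
    by (simp add: dilog_def[abs_def] sums_iff)
qed

lemma dilog_has_real_derivative_chain:
  assumes "(f has_real_derivative f') (at x)" "f x \<noteq> 0" "\<bar>f x\<bar> < 1"
  shows "((\<lambda>x. dilog (f x)) has_real_derivative (- ln (1 - f x) / f x * f')) (at x)"
  using DERIV_chain2[OF dilog_has_real_derivative[OF assms(2,3)] assms(1)] .

lemma continuous_on_dilog_compose:
  assumes "continuous_on S f" "\<And>x. x \<in> S \<Longrightarrow> f x \<in> {-1..1}"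
  shows "continuous_on S (\<lambda>x. dilog (f x))"
  by (rule continuous_on_compose2[OF continuous_on_dilog assms(1)]) (use assms(2) in blast)

lemma dilog_reflection:
  assumes "0 < z" "z < 1"
  shows "dilog z + dilog (1 - z) = pi^2 / 6 - ln z * ln (1 - z)"
proof -
  define h where "h x = dilog x + dilog (1 - x) + ln x * ln (1 - x)" for x
  have "(h has_real_derivative 0) (at x)" if "x \<in> {0<..<1}" for x
  proof -
    have "(h has_real_derivative
            - ln (1 - x) / x + ln x / (1 - x) + (ln (1 - x) / x - ln x / (1 - x))) (at x)"
      unfolding h_def[abs_def] using that
      by (auto intro!: derivative_eq_intros dilog_has_real_derivative_chain
               simp: divide_simps)
    thus ?thesis by simp
  qed
  hence h_const: "h x = h z" if "x \<in> {0<..<1}" for x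
    using DERIV_isconst3[of 0 1 x z h] that assms by auto
  have "(h \<longlongrightarrow> dilog 1 + dilog (1 - 1) + 0) (at_left 1)"
    unfolding h_def[abs_def]
  proof (intro tendsto_add)
    show "(dilog \<longlongrightarrow> dilog 1) (at_left 1)"
      by (rule continuous_on_Icc_at_leftD[OF continuous_on_dilog]) simp
    have "isCont dilog 0"
      by (rule continuous_on_interior[OF continuous_on_dilog]) simp
    thus "((\<lambda>x. dilog (1 - x)) \<longlongrightarrow> dilog (1 - 1)) (at_left 1)"
      by (intro isCont_tendsto_compose[of _ dilog] tendsto_intros) simp
    show "((\<lambda>x::real. ln x * ln (1 - x)) \<longlongrightarrow> 0) (at_left 1)" by real_asymp
  qed
  hence lim: "(h \<longlongrightarrow> pi^2 / 6) (at_left 1)" by (simp add: dilog_1)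
  have "\<forall>\<^sub>F x in at_left 1. h x = h z"
    by (rule eventually_at_left_1) (simp add: h_const)
  hence "(h \<longlongrightarrow> h z) (at_left 1)" by (rule tendsto_eventually)
  with lim have "h z = pi^2 / 6" by (intro tendsto_unique[OF trivial_limit_at_left_real])
  thus ?thesis by (simp add: h_def)
qed

lemma dilog_half: "dilog (1/2) = pi^2 / 12 - (ln 2)^2 / 2"
  using dilog_reflection[of "1/2"] by (simp add: ln_div power2_eq_square)

section \<open>Central binomial coefficients\<close>

definition cbinom :: "nat \<Rightarrow> real" where
  "cbinom n = real (2 * n choose n) / 4^n"

lemma cbinom_0 [simp]: "cbinom 0 = 1"
  by (simp add: cbinom_def)

lemma cbinom_pos: "0 < cbinom n"
  by (simp add: cbinom_def)

lemma cbinom_Suc: "cbinom (Suc n) = cbinom n * (2 * real n + 1) / (2 * real n + 2)"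
proof -
  have fact: "cbinom n = fact (2 * n) / (fact n ^ 2 * 4^n)" for n
    by (simp add: cbinom_def binomial_fact power2_eq_square mult_2)
  have "cbinom (Suc n) = fact (Suc (Suc (2 * n))) / (fact (Suc n) ^ 2 * 4^Suc n)"
    by (simp add: fact)
  also have "\<dots> = cbinom n * ((2 * real n + 2) * (2 * real n + 1) / (4 * (real n + 1)^2))"
    unfolding fact[of n] fact_Suc[of "Suc (2 * n)"] fact_Suc[of "2 * n"] fact_Suc[of n]
    by (simp add: field_simps power2_eq_square)
  also have "4 * (real n + 1)^2 = (2 * real n + 2) * (2 * real n + 2)"
    by (simp add: power2_eq_square algebra_simps)
  finally show ?thesis by simp
qed

lemma cbinom_Suc_le: "cbinom (Suc n) \<le> cbinom n"
  using cbinom_pos[of n] by (simp add: cbinom_Suc mult_left_le divide_le_eq)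

lemma cbinom_le_1: "cbinom n \<le> 1"
proof -
  have "decseq cbinom" by (rule decseq_SucI) (rule cbinom_Suc_le)
  thus ?thesis using decseqD[of cbinom 0 n] by simp
qed

lemma cbinom_div_power_le_1: "cbinom n / real n ^ k \<le> 1"
  using divide_of_nat_power_le_self[of "cbinom n" n k] cbinom_pos[of n] cbinom_le_1[of n] by simp

lemma cbinom_square_le: "(cbinom n)^2 \<le> 1 / (2 * real n + 1)"
proof (induction n)
  case (Suc n)
  have "(cbinom (Suc n))^2 = (cbinom n)^2 * ((2 * real n + 1) / (2 * real n + 2))^2"
    by (simp add: cbinom_Suc power_mult_distrib power_divide)
  also have "\<dots> \<le> 1 / (2 * real n + 1) * ((2 * real n + 1) / (2 * real n + 2))^2"
    by (rule mult_right_mono[OF Suc.IH]) simp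
  also have "\<dots> = (2 * real n + 1) / (2 * real n + 2)^2"
    by (simp add: power2_eq_square)
  also have "\<dots> \<le> 1 / (2 * real (Suc n) + 1)"
  proof -
    have "(2 * real n + 1) * (2 * real n + 3) \<le> (2 * real n + 2)^2"
      by (simp add: power2_eq_square algebra_simps)
    thus ?thesis by (simp add: divide_simps add_ac)
  qed
  finally show ?case .
qed simp

lemma cbinom_le_inverse_sqrt: "cbinom n \<le> 1 / sqrt (2 * real n + 1)"
  using real_sqrt_le_mono[OF cbinom_square_le[of n]] cbinom_pos[of n]
  by (simp add: real_sqrt_divide)

lemma cbinom_tendsto_0: "cbinom \<longlonglongrightarrow> 0"
proof (rule tendsto_sandwich[of "\<lambda>n. 0" _ _ "\<lambda>n. 1 / sqrt (2 * real n + 1)"])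
  show "\<forall>\<^sub>F n in sequentially. 0 \<le> cbinom n"
    using cbinom_pos by (simp add: less_imp_le)
  show "\<forall>\<^sub>F n in sequentially. cbinom n \<le> 1 / sqrt (2 * real n + 1)"
    using cbinom_le_inverse_sqrt by simp
  show "(\<lambda>n. 1 / sqrt (2 * real n + 1)) \<longlonglongrightarrow> 0" by real_asymp
qed simp

lemma harm_Suc_mult_cbinom_tendsto_0: "(\<lambda>n. harm (Suc n) * cbinom n) \<longlonglongrightarrow> 0"
proof (rule tendsto_sandwich[of "\<lambda>n. 0" _ _ "\<lambda>n. (ln (real n + 1) + 1) / sqrt (2 * real n + 1)"])
  have harm_le: "harm (Suc n) \<le> ln (real n + 1) + (1 :: real)" for n
    using euler_mascheroni_sequence_decreasing[of 1 "Suc n"] by (simp add: harm_altdef add.commute)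
  show "\<forall>\<^sub>F n in sequentially.
          harm (Suc n) * cbinom n \<le> (ln (real n + 1) + 1) / sqrt (2 * real n + 1)"
    using mult_mono[OF harm_le cbinom_le_inverse_sqrt] harm_nonneg cbinom_pos
    by (auto intro!: always_eventually simp: less_imp_le)
  show "\<forall>\<^sub>F n in sequentially. 0 \<le> harm (Suc n) * cbinom n"
    using harm_nonneg cbinom_pos by (auto intro!: always_eventually simp: less_imp_le)
  show "(\<lambda>n. (ln (real n + 1) + 1) / sqrt (2 * real n + 1)) \<longlonglongrightarrow> 0" by real_asymp
qed simp

lemma cbinom_eq_gbinomial: "cbinom n = (-1)^n * ((-1/2 :: real) gchoose n)"
proof (induction n)
  case (Suc n)
  have "(real n + 1) * ((-1/2 :: real) gchoose Suc n) = (-1/2 - real n) * ((-1/2) gchoose n)"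
    using gbinomial_mult_1[of "-1/2 :: real" n] by (simp add: algebra_simps)
  hence "((-1/2 :: real) gchoose Suc n) =
           - (((-1/2) gchoose n) * (2 * real n + 1) / (2 * real n + 2))"
    by (simp add: field_simps)
  thus ?case by (simp add: cbinom_Suc Suc.IH)
qed simp

lemma cbinom_powser_sums:
  assumes "\<bar>x\<bar> < 1"
  shows "(\<lambda>n. cbinom n * x^n) sums (1 / sqrt (1 - x))"
proof -
  have "(\<lambda>n. ((-1/2 :: real) gchoose n) * (-x)^n) sums (1 + (-x)) powr (-1/2)"
    by (rule gen_binomial_real) (use assms in simp)
  moreover have "((-1/2 :: real) gchoose n) * (-x)^n = cbinom n * x^n" for n
    unfolding cbinom_eq_gbinomial power_minus[of x n] by (simp only: mult_ac)
  moreover have "(1 + (-x)) powr (-1/2) = 1 / sqrt (1 - x)"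
    using assms powr_minus_divide[of "1 - x" "1/2"] by (simp add: powr_half_sqrt)
  ultimately show ?thesis by simp
qed

section \<open>Series involving central binomial coefficients\<close>

lemma one_plus_sqrt_one_minus_neq_0: "x \<le> 1 \<Longrightarrow> 1 + sqrt (1 - x) \<noteq> 0"
  by (metis add_pos_nonneg diff_ge_0_iff_ge real_sqrt_ge_zero zero_less_one
      order.strict_implies_not_eq not_sym)

lemma cbinom_div_powser_sums:
  assumes "0 \<le> x" "x < 1"
  shows "(\<lambda>n. cbinom n / real n * x^n) sums (2 * ln 2 - 2 * ln (1 + sqrt (1 - x)))"
proof (rule powser_sums_if_deriv[where K = 1])
  show "\<bar>cbinom n / real n\<bar> \<le> 1" for n
    using cbinom_div_power_le_1[of n 1] cbinom_pos[of n] by simp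
  show "continuous_on {0..<1} (\<lambda>x. 2 * ln 2 - 2 * ln (1 + sqrt (1 - x)))"
    by (intro continuous_intros) (auto simp: one_plus_sqrt_one_minus_neq_0)
  fix x :: real assume x: "0 < x" "x < 1"
  show "((\<lambda>x. 2 * ln 2 - 2 * ln (1 + sqrt (1 - x))) has_real_derivative
          1 / (sqrt (1 - x) * (1 + sqrt (1 - x)))) (at x)"
    using x by (auto intro!: derivative_eq_intros simp: divide_simps add_pos_nonneg)
  have "(\<lambda>n. cbinom (Suc n) * x^n) sums ((1 / sqrt (1 - x) - 1) / x)"
    using powser_sums_Suc_coeffs[OF cbinom_powser_sums] x by simp
  moreover have "diffs (\<lambda>n. cbinom n / real n) = (\<lambda>n. cbinom (Suc n))"
    by (simp add: diffs_def del: of_nat_Suc)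
  moreover have "(1 / sqrt (1 - x) - 1) / x = 1 / (sqrt (1 - x) * (1 + sqrt (1 - x)))"
  proof -
    define s where "s = sqrt (1 - x)"
    have s: "0 < s" "s < 1" using x by (auto simp: s_def)
    have "x = (1 - s) * (1 + s)"
      using x by (simp add: s_def algebra_simps flip: power2_eq_square)
    moreover have "(1 / s - 1) / ((1 - s) * (1 + s)) = 1 / (s * (1 + s))"
      using s by (simp add: divide_simps)
    ultimately show ?thesis by (simp add: s_def)
  qed
  ultimately show "(\<lambda>n. diffs (\<lambda>n. cbinom n / real n) n * x^n) sums
                     (1 / (sqrt (1 - x) * (1 + sqrt (1 - x))))" by simp
qed (use assms in simp_all)

lemma cbinom_div_sums: "(\<lambda>n. cbinom n / real n) sums (2 * ln 2)"
proof (rule sums_if_nonneg_powser_tendsto)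
  show "0 \<le> cbinom n / real n" for n
    using cbinom_pos[of n] by simp
  show "(\<lambda>n. cbinom n / real n * x^n) sums (2 * ln 2 - 2 * ln (1 + sqrt (1 - x)))"
    if "0 < x" "x < 1" for x
    using that by (intro cbinom_div_powser_sums) simp_all
  have "((\<lambda>x. 2 * ln 2 - 2 * ln (1 + sqrt (1 - x))) \<longlongrightarrow> 2 * ln 2 - 2 * ln (1 + sqrt (1 - 1)))
          (at_left (1::real))"
    by (intro tendsto_intros) simp_all
  thus "((\<lambda>x. 2 * ln 2 - 2 * ln (1 + sqrt (1 - x))) \<longlongrightarrow> 2 * ln 2) (at_left 1)"
    by simp
qed

lemma cbinom_div_square_powser_sums:
  assumes "0 \<le> x" "x < 1"
  shows "(\<lambda>n. cbinom n / real n ^ 2 * x^n) sums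
           (2 * dilog ((1 - sqrt (1 - x)) / 2) - (ln ((1 + sqrt (1 - x)) / 2))^2)"
proof (rule powser_sums_if_deriv[where K = 1])
  show "\<bar>cbinom n / real n ^ 2\<bar> \<le> 1" for n
    using cbinom_div_power_le_1[of n 2] cbinom_pos[of n] by simp
  have "continuous_on {0..<1} (\<lambda>x. dilog ((1 - sqrt (1 - x)) / 2))"
    by (intro continuous_on_dilog_compose continuous_intros)
       (auto simp: field_simps intro: order_trans[of _ 0] order_trans[of _ 1])
  thus "continuous_on {0..<1}
          (\<lambda>x. 2 * dilog ((1 - sqrt (1 - x)) / 2) - (ln ((1 + sqrt (1 - x)) / 2))^2)"
    by (intro continuous_intros) (auto simp: one_plus_sqrt_one_minus_neq_0)
  fix x :: real assume x: "0 < x" "x < 1"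
  define s where "s = sqrt (1 - x)"
  have s: "0 < s" "s < 1" using x by (auto simp: s_def)
  have x_s: "x = (1 - s) * (1 + s)"
    using x by (simp add: s_def algebra_simps flip: power2_eq_square)
  define L where "L = ln ((1 + s) / 2)"
  have "1 - (1 - s) / 2 = (1 + s) / 2" by (simp add: field_simps)
  hence "((\<lambda>x. 2 * dilog ((1 - sqrt (1 - x)) / 2) - (ln ((1 + sqrt (1 - x)) / 2))^2)
          has_real_derivative - L / (s * (1 - s)) + L / (s * (1 + s))) (at x)"
    using x s unfolding s_def[symmetric]
    by (auto intro!: derivative_eq_intros dilog_has_real_derivative_chain
             simp: s_def[symmetric] L_def divide_simps)
  also have "- L / (s * (1 - s)) + L / (s * (1 + s)) = (2 * ln 2 - 2 * ln (1 + s)) / x"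
    unfolding x_s L_def using s by (simp add: ln_div divide_simps) (simp add: algebra_simps)
  finally show "((\<lambda>x. 2 * dilog ((1 - sqrt (1 - x)) / 2) - (ln ((1 + sqrt (1 - x)) / 2))^2)
                  has_real_derivative (2 * ln 2 - 2 * ln (1 + sqrt (1 - x))) / x) (at x)"
    by (simp only: s_def)
  have "diffs (\<lambda>n. cbinom n / real n ^ 2) = (\<lambda>n. cbinom (Suc n) / real (Suc n))"
    by (simp add: diffs_def power2_eq_square del: of_nat_Suc)
  thus "(\<lambda>n. diffs (\<lambda>n. cbinom n / real n ^ 2) n * x^n) sums
          ((2 * ln 2 - 2 * ln (1 + sqrt (1 - x))) / x)"
    using powser_sums_Suc_coeffs[OF cbinom_div_powser_sums] x by simp
qed (use assms in simp_all)

lemma cbinom_div_square_sums: "(\<lambda>n. cbinom n / real n ^ 2) sums (pi^2 / 6 - 2 * (ln 2)^2)"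
proof (rule sums_if_nonneg_powser_tendsto)
  show "0 \<le> cbinom n / real n ^ 2" for n
    using cbinom_pos[of n] by simp
  show "(\<lambda>n. cbinom n / real n ^ 2 * x^n) sums
          (2 * dilog ((1 - sqrt (1 - x)) / 2) - (ln ((1 + sqrt (1 - x)) / 2))^2)"
    if "0 < x" "x < 1" for x
    using that by (intro cbinom_div_square_powser_sums) simp_all
  have "isCont dilog (1/2)"
    by (rule continuous_on_interior[OF continuous_on_dilog]) simp
  hence "((\<lambda>x. 2 * dilog ((1 - sqrt (1 - x)) / 2) - (ln ((1 + sqrt (1 - x)) / 2))^2) \<longlongrightarrow>
          2 * dilog ((1 - sqrt (1 - 1)) / 2) - (ln ((1 + sqrt (1 - 1)) / 2))^2) (at_left (1::real))"
    by (intro tendsto_intros isCont_tendsto_compose[of _ dilog]) simp_all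
  thus "((\<lambda>x. 2 * dilog ((1 - sqrt (1 - x)) / 2) - (ln ((1 + sqrt (1 - x)) / 2))^2) \<longlongrightarrow>
          pi^2 / 6 - 2 * (ln 2)^2) (at_left 1)"
    by (simp add: dilog_half ln_div)
qed

definition cbinom_tail :: "nat \<Rightarrow> real" where
  "cbinom_tail k = (\<Sum>i. cbinom (i + k) / real (i + k))"

lemma summable_cbinom_tail: "summable (\<lambda>i. cbinom (i + k) / real (i + k))"
  using sums_summable[OF cbinom_div_sums] by (subst summable_iff_shift)

lemma cbinom_tail_0: "cbinom_tail 0 = 2 * ln 2"
  using cbinom_div_sums by (simp add: cbinom_tail_def sums_iff)

lemma cbinom_tail_Suc: "cbinom_tail (Suc k) = cbinom_tail k - cbinom k / real k"
  using suminf_split_head[OF summable_cbinom_tail[of k]] by (simp add: cbinom_tail_def)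

lemma cbinom_tail_nonneg: "0 \<le> cbinom_tail k"
  unfolding cbinom_tail_def
  by (rule suminf_nonneg[OF summable_cbinom_tail]) (simp add: cbinom_pos less_imp_le)

lemma cbinom_tail_le: "cbinom_tail k \<le> 2 * ln 2"
proof -
  have "decseq cbinom_tail"
    by (rule decseq_SucI) (simp add: cbinom_tail_Suc cbinom_pos less_imp_le)
  thus ?thesis using decseqD[of cbinom_tail 0 k] by (simp add: cbinom_tail_0)
qed

lemma cbinom_tail_Suc_le: "cbinom_tail (Suc k) \<le> 2 * cbinom k"
proof -
  have tele: "(\<lambda>i. 2 * (cbinom (i + k) - cbinom (i + Suc k))) sums (2 * cbinom k)"
    using sums_mult[OF telescope_sums'[OF LIMSEQ_ignore_initial_segment[OF cbinom_tendsto_0, of k]],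
        of 2]
    by simp
  have "cbinom (i + Suc k) / real (i + Suc k) \<le> 2 * (cbinom (i + k) - cbinom (i + Suc k))" for i
  proof -
    have "2 * (cbinom (i + k) - cbinom (i + Suc k)) = cbinom (i + k) / real (i + Suc k)"
      by (simp add: cbinom_Suc field_simps)
    thus ?thesis using cbinom_Suc_le[of "i + k"] by (simp add: divide_right_mono)
  qed
  hence "cbinom_tail (Suc k) \<le> (\<Sum>i. 2 * (cbinom (i + k) - cbinom (i + Suc k)))"
    unfolding cbinom_tail_def by (rule suminf_le[OF _ summable_cbinom_tail sums_summable[OF tele]])
  thus ?thesis using tele by (simp add: sums_iff)
qed

lemma cbinom_tail_Suc_powser_sums:
  assumes x: "0 < x" "x < 1"
  shows "(\<lambda>n. cbinom_tail (Suc n) * x^n) sums (2 * ln (1 + sqrt (1 - x)) / (1 - x))"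
proof -
  have bounded: "\<bar>cbinom_tail n\<bar> \<le> 2 * ln 2" for n
    using cbinom_tail_nonneg cbinom_tail_le by simp
  have summable: "summable (\<lambda>n. cbinom_tail n * x^n)"
    using x by (intro summable_powser_bounded_coeffs[OF bounded]) simp
  define P where "P = (\<Sum>n. cbinom_tail (Suc n) * x^n)"
  have "(\<lambda>n. cbinom_tail (Suc n) * x^n) sums P"
    unfolding P_def using powser_split_head(3)[OF summable] by (rule summable_sums)
  moreover have "(\<lambda>n. cbinom_tail n * x^n) sums (2 * ln 2 + P * x)"
    using powser_split_head(1)[OF summable] summable by (simp add: P_def sums_iff cbinom_tail_0)
  ultimately have "(\<lambda>n. cbinom_tail (Suc n) * x^n - cbinom_tail n * x^n) sums
                     (P - (2 * ln 2 + P * x))"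
    by (rule sums_diff)
  moreover have "(\<lambda>n. cbinom_tail (Suc n) * x^n - cbinom_tail n * x^n) =
                   (\<lambda>n. - (cbinom n / real n * x^n))"
    by (simp add: cbinom_tail_Suc algebra_simps)
  moreover have "(\<lambda>n. - (cbinom n / real n * x^n)) sums (- (2 * ln 2 - 2 * ln (1 + sqrt (1 - x))))"
    using x by (intro sums_minus cbinom_div_powser_sums) simp_all
  ultimately have "P - (2 * ln 2 + P * x) = - (2 * ln 2 - 2 * ln (1 + sqrt (1 - x)))"
    using sums_unique2 by metis
  hence "P = 2 * ln (1 + sqrt (1 - x)) / (1 - x)"
    using x by (simp add: field_simps)
  with \<open>(\<lambda>n. cbinom_tail (Suc n) * x^n) sums P\<close> show ?thesis by simp
qed

lemma cbinom_tail_div_powser_sums: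
  assumes "0 \<le> x" "x < 1"
  shows "(\<lambda>k. cbinom_tail k / real k * x^k) sums (pi^2 / 3 + 4 * dilog (- sqrt (1 - x)))"
proof (rule powser_sums_if_deriv[where K = "2 * ln 2"])
  show "\<bar>cbinom_tail k / real k\<bar> \<le> 2 * ln 2" for k
    using divide_of_nat_power_le_self[of "cbinom_tail k" k 1] cbinom_tail_nonneg[of k]
      cbinom_tail_le[of k]
    by simp
  have "continuous_on {0..<1} (\<lambda>x. dilog (- sqrt (1 - x)))"
    by (intro continuous_on_dilog_compose continuous_intros)
       (auto intro: order_trans[of _ 0] order_trans[of _ 1])
  thus "continuous_on {0..<1} (\<lambda>x. pi^2 / 3 + 4 * dilog (- sqrt (1 - x)))"
    by (intro continuous_intros)
  fix x :: real assume x: "0 < x" "x < 1"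
  define s where "s = sqrt (1 - x)"
  have s: "0 < s" "s < 1" "s^2 = 1 - x" using x by (auto simp: s_def)
  have "((\<lambda>x. pi^2 / 3 + 4 * dilog (- sqrt (1 - x))) has_real_derivative
          2 * ln (1 + s) / s^2) (at x)"
    using x s unfolding s_def[symmetric]
    by (auto intro!: derivative_eq_intros dilog_has_real_derivative_chain
             simp: s_def[symmetric] divide_simps power2_eq_square)
  thus "((\<lambda>x. pi^2 / 3 + 4 * dilog (- sqrt (1 - x))) has_real_derivative
          2 * ln (1 + sqrt (1 - x)) / (1 - x)) (at x)"
    by (simp add: s s_def[symmetric])
  have "diffs (\<lambda>k. cbinom_tail k / real k) = (\<lambda>n. cbinom_tail (Suc n))"
    by (simp add: diffs_def del: of_nat_Suc)
  thus "(\<lambda>n. diffs (\<lambda>k. cbinom_tail k / real k) n * x^n) sums (2 * ln (1 + sqrt (1 - x)) / (1 - x))"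
    using cbinom_tail_Suc_powser_sums[OF x] by simp
qed (use assms in \<open>simp_all add: dilog_minus_1\<close>)

lemma cbinom_tail_div_sums: "(\<lambda>k. cbinom_tail k / real k) sums (pi^2 / 3)"
proof (rule sums_if_nonneg_powser_tendsto)
  show "0 \<le> cbinom_tail k / real k" for k
    using cbinom_tail_nonneg[of k] by simp
  show "(\<lambda>k. cbinom_tail k / real k * x^k) sums (pi^2 / 3 + 4 * dilog (- sqrt (1 - x)))"
    if "0 < x" "x < 1" for x
    using that by (intro cbinom_tail_div_powser_sums) simp_all
  have "isCont dilog 0"
    by (rule continuous_on_interior[OF continuous_on_dilog]) simp
  hence "((\<lambda>x. pi^2 / 3 + 4 * dilog (- sqrt (1 - x))) \<longlongrightarrow> pi^2 / 3 + 4 * dilog (- sqrt (1 - 1)))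
          (at_left (1::real))"
    by (intro tendsto_intros isCont_tendsto_compose[of _ dilog]) simp_all
  thus "((\<lambda>x. pi^2 / 3 + 4 * dilog (- sqrt (1 - x))) \<longlongrightarrow> pi^2 / 3) (at_left 1)"
    by simp
qed

text \<open>Summation by parts, with \<open>cbinom n / n = cbinom_tail n - cbinom_tail (Suc n)\<close>.\<close>
lemma cbinom_harm_div_sums: "(\<lambda>n. cbinom n / real n * harm n) sums (pi^2 / 3)"
proof -
  define u where "u n = harm n * cbinom_tail n" for n
  have "(\<lambda>n. u (Suc n)) \<longlonglongrightarrow> 0"
  proof (rule tendsto_sandwich[of "\<lambda>n. 0" _ _ "\<lambda>n. 2 * (harm (Suc n) * cbinom n)"])
    show "\<forall>\<^sub>F n in sequentially. 0 \<le> u (Suc n)"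
      by (auto intro!: always_eventually mult_nonneg_nonneg harm_nonneg cbinom_tail_nonneg
               simp: u_def)
    have "u (Suc n) \<le> 2 * (harm (Suc n) * cbinom n)" for n
      using mult_left_mono[OF cbinom_tail_Suc_le[of n] harm_nonneg[of "Suc n"]]
      by (simp add: u_def mult_ac)
    thus "\<forall>\<^sub>F n in sequentially. u (Suc n) \<le> 2 * (harm (Suc n) * cbinom n)" by simp
    show "(\<lambda>n. 2 * (harm (Suc n) * cbinom n)) \<longlonglongrightarrow> 0"
      using tendsto_mult_right_zero[OF harm_Suc_mult_cbinom_tendsto_0] by simp
  qed simp
  hence "(\<lambda>n. u (Suc n) - u n) sums (0 - u 0)"
    by (rule telescope_sums[OF LIMSEQ_imp_Suc])
  hence "(\<lambda>n. u (Suc n) - u n) sums 0" by (simp add: u_def harm_altdef)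
  moreover have "(\<lambda>n. cbinom_tail (Suc n) / real (Suc n)) sums (pi^2 / 3)"
    using cbinom_tail_div_sums by (subst sums_Suc_iff) simp
  ultimately have "(\<lambda>n. cbinom_tail (Suc n) / real (Suc n) - (u (Suc n) - u n)) sums (pi^2 / 3 - 0)"
    by (intro sums_diff)
  moreover have "cbinom_tail (Suc n) / real (Suc n) - (u (Suc n) - u n) = cbinom n / real n * harm n"
    for n
    by (simp add: u_def harm_Suc cbinom_tail_Suc divide_inverse algebra_simps)
  ultimately show ?thesis by simp
qed

definition harm_cbinom_rem :: "nat \<Rightarrow> real" where
  "harm_cbinom_rem n = (4 + 2 / (real n + 1)) * harm n * cbinom (Suc n)"

lemma harm_cbinom_rem_tendsto_0: "harm_cbinom_rem \<longlonglongrightarrow> 0"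
proof (rule tendsto_sandwich[of "\<lambda>n. 0" _ _ "\<lambda>n. 6 * (harm (Suc n) * cbinom n)"])
  have "harm_cbinom_rem n \<le> 6 * (harm (Suc n) * cbinom n)" for n
  proof -
    have "4 + 2 / (real n + 1) \<le> 6" by (simp add: field_simps)
    moreover have "harm n * cbinom (Suc n) \<le> harm (Suc n) * cbinom n"
      by (intro mult_mono harm_mono cbinom_Suc_le) (auto simp: cbinom_pos less_imp_le)
    ultimately show ?thesis
      unfolding harm_cbinom_rem_def mult.assoc
      by (rule mult_mono) (auto simp: cbinom_pos less_imp_le harm_nonneg)
  qed
  thus "\<forall>\<^sub>F n in sequentially. harm_cbinom_rem n \<le> 6 * (harm (Suc n) * cbinom n)" by simp
  show "\<forall>\<^sub>F n in sequentially. 0 \<le> harm_cbinom_rem n"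
    by (simp add: harm_cbinom_rem_def cbinom_pos less_imp_le harm_nonneg)
  show "(\<lambda>n. 6 * (harm (Suc n) * cbinom n)) \<longlonglongrightarrow> 0"
    using tendsto_mult_right_zero[OF harm_Suc_mult_cbinom_tendsto_0] by simp
qed simp

lemma harm_cbinom_div_square_telescoping:
  "harm (Suc n) * cbinom (Suc n) / (real (Suc n) + 1)^2 =
     2 * (cbinom (Suc n) / real (Suc n) ^ 2) - 2 * (cbinom (Suc n) / real (Suc n) * harm (Suc n))
     + 4 * (cbinom (Suc n) / real (Suc n)) - (harm_cbinom_rem (Suc n) - harm_cbinom_rem n)"
proof -
  define m where "m = real n + 1"
  have m: "0 < m" by (simp add: m_def)
  have eqs: "real (Suc n) = m" "harm (Suc n) = harm n + 1 / m"
    "cbinom (Suc (Suc n)) = cbinom (Suc n) * (2 * m + 1) / (2 * m + 2)"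
    by (simp_all add: m_def harm_Suc cbinom_Suc inverse_eq_divide)
  show ?thesis
    using m unfolding harm_cbinom_rem_def eqs m_def[symmetric]
    by (simp add: divide_simps) (simp add: algebra_simps power2_eq_square)
qed

theorem mainTheorem4:
  shows "(\<lambda>m. let n = Suc m in
            (harm n :: real) * real (2 * n choose n) / ((real n + 1)^2 * 2 ^ (2 * n)))
         sums (- (pi^2 / 3) - 4 * (ln 2)^2 + 8 * ln 2)"
proof -
  define w where
    "w n = 2 * (cbinom n / real n ^ 2) - 2 * (cbinom n / real n * harm n) + 4 * (cbinom n / real n)"
    for n
  have "w sums (2 * (pi^2 / 6 - 2 * (ln 2)^2) - 2 * (pi^2 / 3) + 4 * (2 * ln 2))"
    unfolding w_def
    by (intro sums_add sums_diff sums_mult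
        cbinom_div_square_sums cbinom_harm_div_sums cbinom_div_sums)
  hence "(\<lambda>n. w (Suc n)) sums (- (pi^2 / 3) - 4 * (ln 2)^2 + 8 * ln 2)"
    by (subst sums_Suc_iff) (simp add: w_def algebra_simps)
  moreover have "(\<lambda>n. harm_cbinom_rem (Suc n) - harm_cbinom_rem n) sums 0"
    using telescope_sums[OF harm_cbinom_rem_tendsto_0]
    by (simp add: harm_cbinom_rem_def harm_altdef)
  ultimately have "(\<lambda>n. w (Suc n) - (harm_cbinom_rem (Suc n) - harm_cbinom_rem n)) sums
                     (- (pi^2 / 3) - 4 * (ln 2)^2 + 8 * ln 2)"
    using sums_diff by fastforce
  moreover have "(let n = Suc m in
                   harm n * real (2 * n choose n) / ((real n + 1)^2 * 2 ^ (2 * n))) =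
                   w (Suc m) - (harm_cbinom_rem (Suc m) - harm_cbinom_rem m)" for m
    unfolding Let_def w_def harm_cbinom_div_square_telescoping[symmetric]
    by (simp add: cbinom_def power_mult)
  ultimately show ?thesis by simp
qed

end
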